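(* For an integer $n\ge 1$, let $d_n$ be the smallest constant such that $$\sum_{k=1}^{n}\Big(\frac{1}{k}\sum_{j=1}^{k}a_j\Big)^2\leq d_n\sum_{k=1}^{n}a_k^2\qquad\text{for all }(a_1,\ldots,a_n)\in\mathbb{R}^n.$$ Then for every $n\ge 3$, $$4\Big(1-\frac{4}{\ln n+4}\Big)\le d_n\le 4\Big(1-\frac{8}{(\ln n+4)^2}\Big).$$ *)

theory Defs
  imports Complex_Main
begin

text \<open>The set of admissible constants d in the discrete Hardy inequality of length n,
  vectors (a_1,...,a_n) represented by functions nat => real (only indices 1..n matter).\<close>
definition hardy_admissible :: "nat \<Rightarrow> real set" where
  "hardy_admissible n = {d. \<forall>a :: nat \<Rightarrow> real.
      (\<Sum>k=1..n. ((1 / real k) * (\<Sum>j=1..k. a j))^2) \<le> d * (\<Sum>k=1..n. (a k)^2)}"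

definition hardy_const :: "nat \<Rightarrow> real" where
  "hardy_const n = (LEAST d. d \<in> hardy_admissible n)"

end

theory Submission
  imports Defs "HOL-Analysis.Harmonic_Numbers"
begin

text \<open>
  Lower bound: take the vector a whose partial sums are B_k = \<Prod>j\<le>k. 2j/(2j-1), i.e. a_1 = 2 and
  a_k = B_k/(2k) for k \<ge> 2. Then \<Sum> a_k^2 = F/4 + 3 with F = \<Sum> (B_k/k)^2, and B_k^2 \<ge> 3k + 1 gives
  F \<ge> 3 ln n, so F \<le> d (F/4 + 3) forces d \<ge> 4 ln n / (ln n + 4).

  Upper bound, by Hardy's method of weights: if h_0 = 0 < h_1, ..., h_(n+1) and h_n \<le> h_(n+1), Abel
  summation together with 2xy \<le> x^2 p/q + y^2 q/p bounds \<Sum> a_k^2 from below by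
  \<Sum> b_k^2 (2 - h_(k-1)/h_k - h_(k+1)/h_k), where b_k are the partial sums of a. Take
  h_k = sqrt k * t_k (2S - t_k) with t_(k+1) - t_k = 1/sqrt(k(k+1)), t_(n+1) \<le> S and
  S^2 = (ln n + 4)^2 - 8. The factor sqrt k alone makes the bracket about 1/(4k^2); the concave factor
  t (2S - t) adds 2/(S^2 k^2). Hence d_n \<le> 1/(1/4 + 2/S^2) = 4 (1 - 8/(ln n + 4)^2).
\<close>

lemma cInf_mem_multiplier_set:
  fixes F G :: "'a \<Rightarrow> real"
  assumes "\<And>x. 0 \<le> G x" and "{d. \<forall>x. F x \<le> d * G x} \<noteq> {}"
  shows "Inf {d. \<forall>x. F x \<le> d * G x} \<in> {d. \<forall>x. F x \<le> d * G x}"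
proof (intro CollectI allI)
  let ?D = "{d. \<forall>x. F x \<le> d * G x}"
  fix x
  show "F x \<le> Inf ?D * G x"
  proof (cases "G x = 0")
    case True
    obtain d where "\<forall>x. F x \<le> d * G x" using assms(2) by auto
    then have "F x \<le> d * G x" by blast
    with True show ?thesis by simp
  next
    case False
    with assms(1) have "0 < G x" by (simp add: order_less_le)
    then have "F x / G x \<le> Inf ?D"
      using assms(2) by (intro cInf_greatest) (auto simp: divide_le_eq)
    with \<open>0 < G x\<close> show ?thesis by (simp add: divide_le_eq)
  qed
qed

lemma hardy_const_least:
  assumes "d \<in> hardy_admissible n" and "bdd_below (hardy_admissible n)"
  shows "hardy_const n \<in> hardy_admissible n"
    and "\<And>e. e \<in> hardy_admissible n \<Longrightarrow> hardy_const n \<le> e"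
proof -
  have mem: "Inf (hardy_admissible n) \<in> hardy_admissible n"
    using assms(1) unfolding hardy_admissible_def by (intro cInf_mem_multiplier_set) (auto intro: sum_nonneg)
  have lower: "Inf (hardy_admissible n) \<le> e" if "e \<in> hardy_admissible n" for e
    using that assms(2) by (rule cInf_lower)
  then have "hardy_const n = Inf (hardy_admissible n)"
    unfolding hardy_const_def using mem by (intro Least_equality)
  with mem lower show "hardy_const n \<in> hardy_admissible n"
    and "\<And>e. e \<in> hardy_admissible n \<Longrightarrow> hardy_const n \<le> e" by simp_all
qed

definition double_factorial_ratio :: "nat \<Rightarrow> real" where
  "double_factorial_ratio k = (\<Prod>j=1..k. 2 * real j / (2 * real j - 1))"

lemma double_factorial_ratio_0 [simp]: "double_factorial_ratio 0 = 1"
  by (simp add: double_factorial_ratio_def)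

lemma double_factorial_ratio_Suc:
  "double_factorial_ratio (Suc k) = double_factorial_ratio k * (2 * real k + 2) / (2 * real k + 1)"
  by (simp add: double_factorial_ratio_def prod.cl_ivl_Suc algebra_simps)

lemma double_factorial_ratio_sq_ge: "3 * real k + 1 \<le> (double_factorial_ratio k)\<^sup>2"
proof (induction k)
  case 0
  then show ?case by simp
next
  case (Suc k)
  define x where "x = real k"
  have "3 * (x + 1) + 1 \<le> (3 * x + 1) * (2 * x + 2)\<^sup>2 / (2 * x + 1)\<^sup>2"
  proof -
    have "(3 * (x + 1) + 1) * (2 * x + 1)\<^sup>2 + x = (3 * x + 1) * (2 * x + 2)\<^sup>2"
      by (simp add: power2_eq_square algebra_simps)
    moreover have "0 \<le> x" by (simp add: x_def)
    ultimately show ?thesis by (simp add: le_divide_eq)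
  qed
  also have "\<dots> \<le> (double_factorial_ratio k)\<^sup>2 * (2 * x + 2)\<^sup>2 / (2 * x + 1)\<^sup>2"
    using Suc.IH by (intro divide_right_mono mult_right_mono) (auto simp: x_def)
  also have "\<dots> = (double_factorial_ratio (Suc k))\<^sup>2"
    by (simp add: double_factorial_ratio_Suc x_def power_mult_distrib power_divide)
  finally show ?case by (simp add: x_def)
qed

lemma sum_double_factorial_ratio:
  "(\<Sum>j=1..k. double_factorial_ratio j / (2 * real j)) = double_factorial_ratio k - 1"
proof (induction k)
  case 0
  then show ?case by simp
next
  case (Suc k)
  have "0 < (2 * real k + 1) * (2 * real k + 2)" by simp
  then have "double_factorial_ratio (Suc k) / (2 * real (Suc k))
      = double_factorial_ratio (Suc k) - double_factorial_ratio k"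
    by (simp add: double_factorial_ratio_Suc field_simps)
  with Suc.IH show ?case by simp
qed

definition hardy_test_vector :: "nat \<Rightarrow> real" where
  "hardy_test_vector k = (if k = 1 then 2 else double_factorial_ratio k / (2 * real k))"

lemma hardy_test_vector_eq:
  "hardy_test_vector k = double_factorial_ratio k / (2 * real k) + (if k = 1 then 1 else 0)"
  by (simp add: hardy_test_vector_def double_factorial_ratio_def)

lemma sum_hardy_test_vector:
  assumes "1 \<le> k"
  shows "(\<Sum>j=1..k. hardy_test_vector j) = double_factorial_ratio k"
  using assms sum_double_factorial_ratio[of k] by (simp add: hardy_test_vector_eq sum.distrib)

lemma sum_sq_hardy_test_vector:
  assumes "1 \<le> n"
  shows "(\<Sum>k=1..n. (hardy_test_vector k)\<^sup>2)
       = (\<Sum>k=1..n. (double_factorial_ratio k / real k)\<^sup>2) / 4 + 3"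
proof -
  have "(hardy_test_vector k)\<^sup>2 = (double_factorial_ratio k / real k)\<^sup>2 / 4 + (if k = 1 then 3 else 0)"
    for k
    by (simp add: hardy_test_vector_def double_factorial_ratio_def power_divide power_mult_distrib)
  then show ?thesis
    using assms by (simp add: sum.distrib sum_divide_distrib)
qed

lemma hardy_admissible_ge:
  assumes "1 \<le> n" and "d \<in> hardy_admissible n"
  shows "4 * (1 - 4 / (ln (real n) + 4)) \<le> d"
proof -
  define L where "L = ln (real n)"
  define F where "F = (\<Sum>k=1..n. (double_factorial_ratio k / real k)\<^sup>2)"
  have "(\<Sum>k=1..n. (1 / real k * (\<Sum>j=1..k. hardy_test_vector j))\<^sup>2)
      \<le> d * (\<Sum>k=1..n. (hardy_test_vector k)\<^sup>2)"
    using assms(2) unfolding hardy_admissible_def by blast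
  moreover have "(\<Sum>k=1..n. (1 / real k * (\<Sum>j=1..k. hardy_test_vector j))\<^sup>2) = F"
    unfolding F_def by (intro sum.cong refl) (use sum_hardy_test_vector in auto)
  ultimately have test: "F \<le> d * (F / 4 + 3)"
    using sum_sq_hardy_test_vector[OF assms(1)] by (simp add: F_def)
  have "L \<le> ln (real n + 1)" using assms(1) by (simp add: L_def)
  then have "3 * L \<le> 3 * harm n" using ln_le_harm[of n] by simp
  also have "\<dots> = (\<Sum>k=1..n. 3 * real k / (real k)\<^sup>2)"
    by (simp add: harm_def sum_distrib_left power2_eq_square field_simps)
  also have "\<dots> \<le> F"
    unfolding F_def power_divide
    by (intro sum_mono divide_right_mono) (auto intro: order_trans[OF _ double_factorial_ratio_sq_ge])
  finally have "3 * L \<le> F" .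
  have "0 \<le> L" using assms(1) by (simp add: L_def)
  show ?thesis
  proof (cases "d < 4")
    case True
    have "(1 - d / 4) * (3 * L) \<le> (1 - d / 4) * F"
      using \<open>3 * L \<le> F\<close> True by (intro mult_left_mono) auto
    also have "\<dots> \<le> 3 * d" using test by (simp add: algebra_simps)
    finally have "4 * L \<le> d * (L + 4)" by (simp add: algebra_simps)
    with \<open>0 \<le> L\<close> show ?thesis by (simp add: L_def field_simps)
  next
    case False
    have "4 * (1 - 4 / (L + 4)) \<le> 4" using \<open>0 \<le> L\<close> by simp
    with False show ?thesis unfolding L_def by linarith
  qed
qed

lemma two_mult_le_weighted_squares:
  fixes x y p q :: real
  assumes "0 < p" and "0 < q"
  shows "2 * x * y \<le> x\<^sup>2 * (p / q) + y\<^sup>2 * (q / p)"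
proof -
  have "x\<^sup>2 * (p / q) + y\<^sup>2 * (q / p) - 2 * x * y = (x * p - y * q)\<^sup>2 / (p * q)"
    using assms by (simp add: field_simps power2_eq_square)
  also have "\<dots> \<ge> 0" using assms by simp
  finally show ?thesis by simp
qed

lemma sum_sq_diff_ge_weighted:
  fixes b h :: "nat \<Rightarrow> real"
  assumes "b 0 = 0" and "h 0 = 0" and "\<And>k. 1 \<le> k \<Longrightarrow> k \<le> m + 1 \<Longrightarrow> 0 < h k"
  shows "(\<Sum>k=1..m. (b k)\<^sup>2 * (2 - h (k-1) / h k - h (k+1) / h k)) + (b m)\<^sup>2 * (h (m+1) / h m - 1)
       \<le> (\<Sum>k=1..m. (b k - b (k-1))\<^sup>2)"
  using assms(3)
proof (induction m)
  case 0
  then show ?case using assms(1) by simp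
next
  case (Suc m)
  have "2 * b (Suc m) * b m \<le> (b (Suc m))\<^sup>2 * (h m / h (Suc m)) + (b m)\<^sup>2 * (h (Suc m) / h m)"
  proof (cases "m = 0")
    case True
    then show ?thesis using assms(1,2) by simp
  next
    case False
    then show ?thesis using Suc.prems by (intro two_mult_le_weighted_squares) auto
  qed
  then have "(b (Suc m))\<^sup>2 * (1 - h m / h (Suc m)) - (b m)\<^sup>2 * (h (Suc m) / h m - 1)
      \<le> (b (Suc m) - b m)\<^sup>2"
    by (simp add: power2_eq_square algebra_simps)
  with Suc show ?case by (simp add: algebra_simps)
qed

lemma hardy_admissible_of_weight:
  fixes h :: "nat \<Rightarrow> real" and c :: real
  assumes "0 < c" and "h 0 = 0" and pos: "\<And>k. 1 \<le> k \<Longrightarrow> k \<le> n + 1 \<Longrightarrow> 0 < h k"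
    and "h n \<le> h (n + 1)"
    and diff: "\<And>k. 1 \<le> k \<Longrightarrow> k \<le> n \<Longrightarrow> c / (real k)\<^sup>2 * h k \<le> 2 * h k - h (k-1) - h (k+1)"
  shows "1 / c \<in> hardy_admissible n"
  unfolding hardy_admissible_def
proof (intro CollectI allI)
  fix a :: "nat \<Rightarrow> real"
  define b where "b k = (\<Sum>j=1..k. a j)" for k
  have "b 0 = 0" by (simp add: b_def)
  have "c / (real k)\<^sup>2 \<le> 2 - h (k-1) / h k - h (k+1) / h k" if "1 \<le> k" "k \<le> n" for k
  proof -
    have "0 < h k" using pos that by simp
    then have "c / (real k)\<^sup>2 = c / (real k)\<^sup>2 * h k / h k" by simp
    also have "\<dots> \<le> (2 * h k - h (k-1) - h (k+1)) / h k"
      using diff[OF that] \<open>0 < h k\<close> by (intro divide_right_mono) auto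
    also have "\<dots> = 2 - h (k-1) / h k - h (k+1) / h k"
      using \<open>0 < h k\<close> by (simp add: field_simps)
    finally show ?thesis .
  qed
  then have "(\<Sum>k=1..n. (b k)\<^sup>2 * (c / (real k)\<^sup>2))
      \<le> (\<Sum>k=1..n. (b k)\<^sup>2 * (2 - h (k-1) / h k - h (k+1) / h k))"
    by (intro sum_mono mult_left_mono) auto
  also have "\<dots> \<le> (\<Sum>k=1..n. (b k - b (k-1))\<^sup>2)"
  proof -
    have "0 \<le> (b n)\<^sup>2 * (h (n+1) / h n - 1)"
    proof (cases "n = 0")
      case False
      with pos[of n] assms(4) show ?thesis by (simp add: field_simps mult_right_mono)
    qed (simp add: \<open>b 0 = 0\<close>)
    with sum_sq_diff_ge_weighted[of b h n, OF \<open>b 0 = 0\<close> assms(2) pos] show ?thesis by simp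
  qed
  also have "\<dots> = (\<Sum>k=1..n. (a k)\<^sup>2)"
  proof (intro sum.cong refl)
    fix k assume "k \<in> {1..n}"
    then show "(b k - b (k-1))\<^sup>2 = (a k)\<^sup>2" by (cases k) (simp_all add: b_def)
  qed
  finally have "c * (\<Sum>k=1..n. (1 / real k * b k)\<^sup>2) \<le> (\<Sum>k=1..n. (a k)\<^sup>2)"
    by (simp add: sum_distrib_left power_divide mult_ac)
  with \<open>0 < c\<close> show "(\<Sum>k=1..n. (1 / real k * (\<Sum>j=1..k. a j))\<^sup>2) \<le> 1 / c * (\<Sum>k=1..n. (a k)\<^sup>2)"
    by (simp add: b_def field_simps)
qed

lemma ln_add_one_ge:
  fixes x :: real
  assumes "0 \<le> x"
  shows "2 * x / (2 + x) \<le> ln (1 + x)"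
proof -
  let ?f = "\<lambda>z. ln (1 + z) - 2 * z / (2 + z)"
  have "?f 0 \<le> ?f x"
  proof (rule DERIV_nonneg_imp_nondecreasing[OF assms])
    fix z :: real
    assume z: "0 \<le> z" "z \<le> x"
    have "(?f has_real_derivative 1 / (1 + z) - 4 / (2 + z)\<^sup>2) (at z)"
      using z by (auto intro!: derivative_eq_intros simp: field_simps power2_eq_square)
    moreover have "4 / (2 + z)\<^sup>2 \<le> 1 / (1 + z)"
    proof -
      have "4 * (1 + z) \<le> (2 + z)\<^sup>2" by (simp add: power2_eq_square algebra_simps)
      with z show ?thesis by (simp add: divide_simps)
    qed
    ultimately show "\<exists>y. (?f has_real_derivative y) (at z) \<and> 0 \<le> y" by auto
  qed
  then show ?thesis by simp
qed

lemma inverse_sqrt_mult_Suc_le: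
  fixes x :: real
  assumes "1 \<le> x"
  shows "1 / sqrt (x * (x + 1)) \<le> 2 / (2 * x + 1) + 1 / (8 * (x * (x + 1)))"
proof -
  define w where "w = sqrt (x * (x + 1))"
  define p where "p = 2 * x + 1"
  have w2: "w\<^sup>2 = x * (x + 1)" and "1 \<le> w"
    using assms mult_mono[of 1 x 1 "x + 1"] by (auto simp: w_def real_le_rsqrt)
  have p2: "p\<^sup>2 = 4 * w\<^sup>2 + 1" unfolding p_def w2 by (simp add: power2_eq_square algebra_simps)
  then have "(2 * w)\<^sup>2 < p\<^sup>2" by (simp add: power_mult_distrib)
  moreover have "0 \<le> p" using assms by (simp add: p_def)
  ultimately have "2 * w < p" by (rule power2_less_imp_less)
  have "(p - 2 * w) * (p + 2 * w) = 1" using p2 by (simp add: power2_eq_square algebra_simps)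
  then have "p - 2 * w = 1 / (p + 2 * w)"
    using \<open>2 * w < p\<close> \<open>1 \<le> w\<close> by (simp add: field_simps)
  then have "8 * w * (p - 2 * w) = 8 * w / (p + 2 * w)" by simp
  also have "\<dots> \<le> 8 * w / (4 * w)"
    using \<open>2 * w < p\<close> \<open>1 \<le> w\<close> by (intro divide_left_mono) auto
  also have "\<dots> = 2" using \<open>1 \<le> w\<close> by simp
  finally have "8 * w * p \<le> 16 * w\<^sup>2 + 2" by (simp add: power2_eq_square algebra_simps)
  moreover have "2 \<le> p" using assms by (simp add: p_def)
  ultimately have "8 * w * p \<le> 16 * w\<^sup>2 + p" by linarith
  then have "1 / w \<le> 2 / p + 1 / (8 * w\<^sup>2)"
    using \<open>1 \<le> w\<close> \<open>2 * w < p\<close> by (simp add: field_simps power2_eq_square)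
  then show ?thesis unfolding w2 unfolding w_def p_def .
qed

lemma sum_inverse_sqrt_mult_Suc_le:
  "(\<Sum>j=1..n. 1 / sqrt (real j * (real j + 1))) \<le> ln (real n + 1) + 1/8 - 1 / (8 * (real n + 1))"
proof (induction n)
  case 0
  then show ?case by simp
next
  case (Suc n)
  define x where "x = real (Suc n)"
  have "1 \<le> x" by (simp add: x_def)
  have "2 / (2 * x + 1) = 2 * (1 / x) / (2 + 1 / x)"
    using \<open>1 \<le> x\<close> by (simp add: field_simps)
  also have "\<dots> \<le> ln (1 + 1 / x)"
    using \<open>1 \<le> x\<close> by (intro ln_add_one_ge) simp
  also have "1 + 1 / x = (x + 1) / x"
    using \<open>1 \<le> x\<close> by (simp add: field_simps)
  also have "ln ((x + 1) / x) = ln (x + 1) - ln x"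
    using \<open>1 \<le> x\<close> by (intro ln_divide_pos) auto
  finally have "2 / (2 * x + 1) \<le> ln (x + 1) - ln x" .
  moreover have "1 / (8 * (x * (x + 1))) = 1 / (8 * x) - 1 / (8 * (x + 1))"
    using \<open>1 \<le> x\<close> by (simp add: field_simps)
  ultimately have "1 / sqrt (x * (x + 1))
      \<le> (ln (x + 1) + 1/8 - 1 / (8 * (x + 1))) - (ln x + 1/8 - 1 / (8 * x))"
    using inverse_sqrt_mult_Suc_le[OF \<open>1 \<le> x\<close>] by linarith
  moreover have "(\<Sum>j=1..Suc n. 1 / sqrt (real j * (real j + 1)))
      = (\<Sum>j=1..n. 1 / sqrt (real j * (real j + 1))) + 1 / sqrt (x * (x + 1))"
    by (simp add: x_def)
  moreover have "real n + 1 = x" by (simp add: x_def)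
  with Suc.IH have "(\<Sum>j=1..n. 1 / sqrt (real j * (real j + 1))) \<le> ln x + 1/8 - 1 / (8 * x)"
    by (simp only:)
  ultimately show ?case
    unfolding x_def[symmetric] by linarith
qed

lemma sqrt_second_difference_ge:
  fixes x :: real
  assumes "1 \<le> x"
  shows "1 / (4 * sqrt x ^ 3) \<le> 2 * sqrt x - sqrt (x - 1) - sqrt (x + 1)"
proof -
  define a b c where "a = sqrt (x - 1)" and "b = sqrt x" and "c = sqrt (x + 1)"
  have "1 \<le> b" and b2: "b\<^sup>2 = x" using assms by (auto simp: b_def)
  have a2: "a\<^sup>2 = x - 1" and c2: "c\<^sup>2 = x + 1" using assms by (auto simp: a_def c_def)
  have ac: "a * c = sqrt (x\<^sup>2 - 1)"
    using assms by (simp add: a_def c_def real_sqrt_mult[symmetric] power2_eq_square algebra_simps)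
  have "1 \<le> x\<^sup>2" using assms by (simp add: one_le_power)
  have "(2 * sqrt (x\<^sup>2 - 1))\<^sup>2 = 4 * x\<^sup>2 - 4"
    using \<open>1 \<le> x\<^sup>2\<close> by (simp add: power_mult_distrib)
  also have "\<dots> \<le> (2 * x - 1 / x)\<^sup>2"
    using assms by (simp add: power2_eq_square field_simps)
  finally have "2 * sqrt (x\<^sup>2 - 1) \<le> 2 * x - 1 / x"
  proof (rule power2_le_imp_le)
    have "1 / x \<le> 1" using assms by simp
    with assms show "0 \<le> 2 * x - 1 / x" by linarith
  qed
  then have "(a + c)\<^sup>2 \<le> 4 * x - 1 / x"
    using a2 c2 ac by (simp add: power2_eq_square algebra_simps)
  also have "\<dots> \<le> (2 * b - 1 / (4 * b ^ 3))\<^sup>2"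
  proof -
    have "(2 * b - 1 / (4 * b ^ 3))\<^sup>2 = 4 * b\<^sup>2 - 1 / b\<^sup>2 + 1 / (16 * b ^ 6)"
      using \<open>1 \<le> b\<close> by (simp add: power2_eq_square field_simps power3_eq_cube numeral_eq_Suc)
    with b2 show ?thesis by simp
  qed
  finally have "a + c \<le> 2 * b - 1 / (4 * b ^ 3)"
  proof (rule power2_le_imp_le)
    have "1 \<le> b ^ 3" using \<open>1 \<le> b\<close> by (rule one_le_power)
    then have "1 / (4 * b ^ 3) \<le> 1 / 4" by (intro divide_left_mono) (use \<open>1 \<le> b\<close> in auto)
    with \<open>1 \<le> b\<close> show "0 \<le> 2 * b - 1 / (4 * b ^ 3)" by linarith
  qed
  then show ?thesis by (simp add: a_def b_def c_def)
qed

lemma sqrt_ratio_sum_ge_two: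
  fixes x :: real
  assumes "1 < x"
  shows "2 \<le> sqrt x / sqrt (x - 1) + sqrt x / sqrt (x + 1)"
proof -
  define p q where "p = sqrt x / sqrt (x - 1)" and "q = sqrt x / sqrt (x + 1)"
  have "0 < p" using assms by (simp add: p_def)
  have "sqrt (x\<^sup>2 - 1) \<le> x"
    using assms real_sqrt_le_mono[of "x\<^sup>2 - 1" "x\<^sup>2"] by simp
  moreover have "0 < sqrt (x\<^sup>2 - 1)" using assms by (simp add: one_less_power)
  ultimately have "1 \<le> x / sqrt (x\<^sup>2 - 1)" by simp
  also have "x / sqrt (x\<^sup>2 - 1) = p * q"
    using assms by (simp add: p_def q_def real_sqrt_mult[symmetric] power2_eq_square algebra_simps)
  finally have "1 / p \<le> q" using \<open>0 < p\<close> by (simp add: field_simps)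
  moreover have "2 \<le> p + 1 / p"
  proof -
    have "0 \<le> (p - 1)\<^sup>2" by simp
    with \<open>0 < p\<close> show ?thesis by (simp add: field_simps power2_eq_square)
  qed
  ultimately show ?thesis unfolding p_def[symmetric] q_def[symmetric] by linarith
qed

definition hardy_weight :: "real \<Rightarrow> (nat \<Rightarrow> real) \<Rightarrow> nat \<Rightarrow> real" where
  "hardy_weight S t k = sqrt (real k) * (t k * (2 * S - t k))"

lemma hardy_weight_second_diff_interior:
  fixes S :: real and t :: "nat \<Rightarrow> real"
  assumes "2 \<le> k" and "0 < S" and "0 < t k" and "t k \<le> S"
    and t_prev: "t k = t (k - 1) + 1 / sqrt (real (k - 1) * real k)"
    and t_next: "t (k + 1) = t k + 1 / sqrt (real k * (real k + 1))"
  shows "(1/4 + 2 / S\<^sup>2) / (real k)\<^sup>2 * hardy_weight S t k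
       \<le> 2 * hardy_weight S t k - hardy_weight S t (k - 1) - hardy_weight S t (k + 1)"
proof -
  define x where "x = real k"
  have "1 < x" using assms(1) by (simp add: x_def)
  define a b c G where "a = sqrt (x - 1)" and "b = sqrt x" and "c = sqrt (x + 1)"
    and "G = t k * (2 * S - t k)"
  have "0 < a" "0 < b" "0 < c" using \<open>1 < x\<close> by (simp_all add: a_def b_def c_def)
  have "real (k - 1) = x - 1" using assms(1) by (simp add: x_def of_nat_diff)
  then have weights: "hardy_weight S t (k - 1) = a * (t (k - 1) * (2 * S - t (k - 1)))"
      "hardy_weight S t k = b * G" "hardy_weight S t (k + 1) = c * (t (k + 1) * (2 * S - t (k + 1)))"
    by (simp_all add: hardy_weight_def a_def b_def c_def G_def x_def)
  have tm: "t (k - 1) = t k - 1 / (a * b)" and tp: "t (k + 1) = t k + 1 / (b * c)"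
    using t_prev t_next \<open>real (k - 1) = x - 1\<close> \<open>1 < x\<close>
    by (simp_all add: a_def b_def c_def x_def real_sqrt_mult)
  \<comment> \<open>The increments of t are chosen so that the first-order terms cancel.\<close>
  have "2 * hardy_weight S t k - hardy_weight S t (k - 1) - hardy_weight S t (k + 1)
      = (2 * b - a - c) * G + (1 / b\<^sup>2) * (1 / a + 1 / c)"
    unfolding weights G_def tm tp using \<open>0 < a\<close> \<open>0 < b\<close> \<open>0 < c\<close>
    by (simp add: field_simps power2_eq_square)
  moreover have "G / (4 * b ^ 3) \<le> (2 * b - a - c) * G"
  proof -
    have "0 \<le> G" using assms(3,4) by (simp add: G_def)
    have "1 / (4 * b ^ 3) \<le> 2 * b - a - c"
      using sqrt_second_difference_ge[of x] \<open>1 < x\<close> by (simp add: a_def b_def c_def)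
    then have "1 / (4 * b ^ 3) * G \<le> (2 * b - a - c) * G" using \<open>0 \<le> G\<close> by (rule mult_right_mono)
    then show ?thesis by simp
  qed
  moreover have "2 * G / (S\<^sup>2 * b ^ 3) \<le> (1 / b\<^sup>2) * (1 / a + 1 / c)"
  proof -
    have "S\<^sup>2 - G = (S - t k)\<^sup>2" by (simp add: G_def power2_eq_square algebra_simps)
    then have "G \<le> S\<^sup>2" by (metis diff_ge_0_iff_ge zero_le_power2)
    then have "2 * G / (S\<^sup>2 * b ^ 3) \<le> 2 * S\<^sup>2 / (S\<^sup>2 * b ^ 3)"
      using \<open>0 < b\<close> by (intro divide_right_mono) auto
    also have "\<dots> = 2 / b ^ 3" using \<open>0 < S\<close> by simp
    also have "\<dots> \<le> (b / a + b / c) / b ^ 3"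
      using sqrt_ratio_sum_ge_two[OF \<open>1 < x\<close>] \<open>0 < b\<close>
      by (intro divide_right_mono) (simp_all add: a_def b_def c_def)
    also have "\<dots> = (1 / b\<^sup>2) * (1 / a + 1 / c)"
      using \<open>0 < a\<close> \<open>0 < b\<close> \<open>0 < c\<close> by (simp add: field_simps power2_eq_square power3_eq_cube)
    finally show ?thesis .
  qed
  moreover have "(1/4 + 2 / S\<^sup>2) / (real k)\<^sup>2 * hardy_weight S t k = G / (4 * b ^ 3) + 2 * G / (S\<^sup>2 * b ^ 3)"
  proof -
    have "real k = b\<^sup>2" using \<open>1 < x\<close> by (simp add: b_def x_def)
    then show ?thesis unfolding weights
      using \<open>0 < b\<close> \<open>0 < S\<close> by (simp add: field_simps power2_eq_square power3_eq_cube)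
  qed
  ultimately show ?thesis by linarith
qed

text \<open>Only the first step depends on the constants 4, 8 and 11/24 of the theorem; it reduces to a
  numerical estimate using 1.4142 \<le> sqrt 2 \<le> 1.4143.\<close>

lemma hardy_weight_second_diff_first:
  fixes S L y :: real and t :: "nat \<Rightarrow> real"
  assumes "0 \<le> L" and "0 < S" and S2: "S\<^sup>2 = (L + 4)\<^sup>2 - 8"
    and t1: "t 1 = S - y" and "0 \<le> y" and "y \<le> L + 11/24"
    and t2: "t 2 = t 1 + 1 / sqrt 2"
  shows "(1/4 + 2 / S\<^sup>2) * hardy_weight S t 1
       \<le> 2 * hardy_weight S t 1 - hardy_weight S t 0 - hardy_weight S t 2"
proof -
  define r where "r = sqrt 2"
  define Q where "Q = S\<^sup>2 - y\<^sup>2"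
  have "0 < r" and "r\<^sup>2 = 2" by (simp_all add: r_def)
  have "r \<le> 14143/10000"
    unfolding r_def by (rule real_le_lsqrt) (simp_all add: power2_eq_square)
  have "14142/10000 \<le> r"
    unfolding r_def by (rule real_le_rsqrt) (simp add: power2_eq_square)
  have h1: "hardy_weight S t 1 = Q"
    unfolding hardy_weight_def t1 by (simp add: Q_def power2_eq_square algebra_simps)
  have h2: "hardy_weight S t 2 = r * Q + 2 * y - r / 2"
  proof -
    have "1 / r = r / 2" using \<open>0 < r\<close> \<open>r\<^sup>2 = 2\<close> by (simp add: field_simps power2_eq_square)
    moreover have "r * ((S - y + 1 / r) * (2 * S - (S - y + 1 / r))) = r * Q + 2 * y - 1 / r"
      using \<open>0 < r\<close> by (simp add: Q_def field_simps power2_eq_square)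
    ultimately show ?thesis unfolding hardy_weight_def t2 t1 r_def by simp
  qed
  have "7 * L + 77/10 \<le> Q"
  proof -
    have "y\<^sup>2 \<le> (L + 11/24)\<^sup>2" using \<open>0 \<le> y\<close> \<open>y \<le> L + 11/24\<close> by (intro power_mono) auto
    with \<open>0 \<le> L\<close> show ?thesis unfolding Q_def S2 by (simp add: power2_eq_square algebra_simps)
  qed
  have "Q \<le> S\<^sup>2" by (simp add: Q_def)
  then have "2 * Q / S\<^sup>2 \<le> 2" using \<open>0 < S\<close> by (simp add: divide_le_eq)
  moreover have "23499/10000 * L + 258489/100000 \<le> (7/4 - r) * Q"
  proof -
    have "(3357/10000) * (7 * L + 77/10) \<le> (7/4 - r) * Q"
      using \<open>r \<le> 14143/10000\<close> \<open>7 * L + 77/10 \<le> Q\<close> \<open>0 \<le> L\<close> by (intro mult_mono) auto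
    moreover have "(3357/10000) * (7 * L + 77/10) = 23499/10000 * L + 258489/100000"
      by (simp add: field_simps)
    ultimately show ?thesis by linarith
  qed
  ultimately have "23499/10000 * L + 584/1000 \<le> (7/4 - r) * Q - 2 * Q / S\<^sup>2"
    by linarith
  also have "\<dots> = 2 * Q - r * Q - (1/4 + 2 / S\<^sup>2) * Q"
    by (simp add: algebra_simps)
  finally have "23499/10000 * L + 584/1000 \<le> 2 * Q - r * Q - (1/4 + 2 / S\<^sup>2) * Q" .
  moreover have "hardy_weight S t 0 = 0" by (simp add: hardy_weight_def)
  ultimately show ?thesis
    unfolding h1 h2 using \<open>14142/10000 \<le> r\<close> \<open>y \<le> L + 11/24\<close> \<open>0 \<le> L\<close> by linarith
qed

lemma hardy_weight_second_diff:
  fixes L S y :: real and t :: "nat \<Rightarrow> real"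
  assumes "0 \<le> L" and "0 < S" and S2: "S\<^sup>2 = (L + 4)\<^sup>2 - 8"
    and "t 1 = S - y" and "0 \<le> y" and "y \<le> L + 11/24"
    and t_Suc: "\<And>j. 1 \<le> j \<Longrightarrow> t (Suc j) = t j + 1 / sqrt (real j * (real j + 1))"
    and "1 \<le> k" and "0 < t k" and "t k \<le> S"
  shows "(1/4 + 2 / S\<^sup>2) / (real k)\<^sup>2 * hardy_weight S t k
       \<le> 2 * hardy_weight S t k - hardy_weight S t (k - 1) - hardy_weight S t (k + 1)"
proof (cases "k = 1")
  case True
  have "t 2 = t 1 + 1 / sqrt 2" using t_Suc[of 1] by (simp add: numeral_2_eq_2)
  with hardy_weight_second_diff_first[where t = t, OF assms(1-6)] True show ?thesis
    by (simp add: numeral_2_eq_2)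
next
  case False
  then have "2 \<le> k" using \<open>1 \<le> k\<close> by simp
  have "t k = t (k - 1) + 1 / sqrt (real (k - 1) * real k)"
    using t_Suc[of "k - 1"] \<open>2 \<le> k\<close> by (simp add: of_nat_diff)
  moreover have "t (k + 1) = t k + 1 / sqrt (real k * (real k + 1))"
    using t_Suc[of k] \<open>1 \<le> k\<close> by simp
  ultimately show ?thesis
    using hardy_weight_second_diff_interior[where t = t, OF \<open>2 \<le> k\<close> \<open>0 < S\<close> \<open>0 < t k\<close> \<open>t k \<le> S\<close>] by blast
qed

lemma hardy_weight_pos:
  assumes "1 \<le> k" and "0 < t k" and "t k \<le> S"
  shows "0 < hardy_weight S t k"
  using assms by (simp add: hardy_weight_def)

lemma hardy_weight_mono:
  assumes "k \<le> m" and "0 \<le> t k" and "t k \<le> t m" and "t m \<le> S"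
  shows "hardy_weight S t k \<le> hardy_weight S t m"
proof -
  have "t m * (2 * S - t m) - t k * (2 * S - t k) = (t m - t k) * (2 * S - t k - t m)"
    by (simp add: algebra_simps)
  also have "\<dots> \<ge> 0" using assms by simp
  finally have "t k * (2 * S - t k) \<le> t m * (2 * S - t m)" by simp
  moreover have "sqrt (real k) \<le> sqrt (real m)" using assms(1) by simp
  moreover have "0 \<le> t k * (2 * S - t k)" using assms by simp
  ultimately show ?thesis unfolding hardy_weight_def by (simp add: mult_mono)
qed

lemma hardy_admissible_of_scale:
  fixes L S y :: real
  assumes "0 \<le> L" and "0 < S" and S2: "S\<^sup>2 = (L + 4)\<^sup>2 - 8"
    and y_ge: "ln (real n + 1) + 1/8 \<le> y" and "y \<le> L + 11/24" and "y < S"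
  shows "1 / (1/4 + 2 / S\<^sup>2) \<in> hardy_admissible n"
proof -
  define t where "t k = S - y + (\<Sum>j=1..<k. 1 / sqrt (real j * (real j + 1)))" for k
  define c where "c = 1/4 + 2 / S\<^sup>2"
  have "0 \<le> ln (real n + 1)" by simp
  with y_ge have "0 \<le> y" by linarith
  have t_Suc: "t (Suc k) = t k + 1 / sqrt (real k * (real k + 1))" if "1 \<le> k" for k
    using that by (simp add: t_def)
  have "t 1 = S - y" by (simp add: t_def)
  have t_mono: "t k \<le> t m" if "k \<le> m" for k m
    using that unfolding t_def by (intro add_left_mono sum_mono2) auto
  have t_range: "0 < t k \<and> t k \<le> S" if "k \<le> n + 1" for k
  proof
    show "0 < t k" using \<open>y < S\<close> unfolding t_def by (intro add_pos_nonneg sum_nonneg) auto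
    have "t (n + 1) = S - y + (\<Sum>j=1..n. 1 / sqrt (real j * (real j + 1)))"
      by (simp add: t_def atLeastLessThanSuc_atLeastAtMost)
    also have "\<dots> \<le> S"
    proof -
      have "0 \<le> 1 / (8 * (real n + 1))" by simp
      with sum_inverse_sqrt_mult_Suc_le[of n] y_ge show ?thesis by linarith
    qed
    finally show "t k \<le> S" using t_mono[OF that] by simp
  qed
  have "1 / c \<in> hardy_admissible n"
  proof (rule hardy_admissible_of_weight)
    show "0 < c" unfolding c_def by (simp add: add_pos_nonneg)
    show "hardy_weight S t 0 = 0" by (simp add: hardy_weight_def)
    show "0 < hardy_weight S t k" if "1 \<le> k" "k \<le> n + 1" for k
      using t_range[OF that(2)] that(1) by (intro hardy_weight_pos) auto
    show "hardy_weight S t n \<le> hardy_weight S t (n + 1)"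
      using t_range[of n] t_range[of "n + 1"] t_mono[of n "n + 1"] by (intro hardy_weight_mono) auto
    show "c / (real k)\<^sup>2 * hardy_weight S t k
        \<le> 2 * hardy_weight S t k - hardy_weight S t (k - 1) - hardy_weight S t (k + 1)"
      if "1 \<le> k" "k \<le> n" for k
      using t_range[of k] that unfolding c_def
      by (intro hardy_weight_second_diff[OF \<open>0 \<le> L\<close> \<open>0 < S\<close> S2 \<open>t 1 = S - y\<close> \<open>0 \<le> y\<close>
            \<open>y \<le> L + 11/24\<close> t_Suc]) auto
  qed
  then show ?thesis by (simp add: c_def)
qed

lemma hardy_admissible_upper:
  assumes "3 \<le> n"
  shows "4 * (1 - 8 / (ln (real n) + 4)\<^sup>2) \<in> hardy_admissible n"
proof -
  define L where "L = ln (real n)"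
  define S where "S = sqrt ((L + 4)\<^sup>2 - 8)"
  define y where "y = ln (real n + 1) + 1/8"
  have "0 \<le> L" using assms by (simp add: L_def)
  then have "16 \<le> (L + 4)\<^sup>2" using power_mono[of 4 "L + 4" 2] by simp
  then have S2: "S\<^sup>2 = (L + 4)\<^sup>2 - 8" and "0 < S" by (simp_all add: S_def)
  have "y \<le> L + 11/24"
  proof -
    have "ln (real n + 1) - L < 1 / real n" using assms by (simp add: L_def ln_diff_le_inverse)
    moreover have "1 / real n \<le> 1 / 3" using assms by simp
    ultimately show ?thesis by (simp add: y_def)
  qed
  have "y < S"
  proof -
    have "y\<^sup>2 \<le> (L + 11/24)\<^sup>2" using \<open>y \<le> L + 11/24\<close> by (intro power_mono) (simp_all add: y_def)
    also have "\<dots> < S\<^sup>2" unfolding S2 using \<open>0 \<le> L\<close> by (simp add: power2_eq_square algebra_simps)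
    finally show ?thesis using \<open>0 < S\<close> by (simp add: power_less_imp_less_base)
  qed
  have "1 / (1/4 + 2 / S\<^sup>2) \<in> hardy_admissible n"
    by (rule hardy_admissible_of_scale[OF \<open>0 \<le> L\<close> \<open>0 < S\<close> S2 _ \<open>y \<le> L + 11/24\<close> \<open>y < S\<close>])
      (simp add: y_def)
  moreover have "1 / (1/4 + 2 / S\<^sup>2) = 4 * (1 - 8 / (L + 4)\<^sup>2)"
  proof -
    have "(L + 4)\<^sup>2 \<noteq> 0" "S\<^sup>2 \<noteq> 0" using \<open>0 \<le> L\<close> \<open>0 < S\<close> by simp_all
    then show ?thesis by (simp add: S2 field_simps)
  qed
  ultimately show ?thesis by (simp add: L_def)
qed

theorem theorem1p1:
  fixes n :: nat
  assumes "n \<ge> 3"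
  shows "4 * (1 - 4 / (ln (real n) + 4)) \<le> hardy_const n
       \<and> hardy_const n \<le> 4 * (1 - 8 / (ln (real n) + 4)^2)"
proof -
  have "1 \<le> n" using assms by simp
  note lower = hardy_admissible_ge[OF this]
  note upper = hardy_admissible_upper[OF assms]
  have "bdd_below (hardy_admissible n)" using lower by (rule bdd_belowI)
  note least = hardy_const_least[OF upper this]
  from lower[OF least(1)] least(2)[OF upper] show ?thesis by simp
qed

end
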